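(* Let $r_I>r_0>0$, $v_1,v_2>0$, $w_V>0$ and $w_I$ be real numbers with $\frac{r_0 w_V v_2}{r_I(v_1+v_2)}<w_I<\frac{w_V v_2}{v_1+v_2}$. Let $n\ge 1$ be an integer and $l_1,\dots,l_{n-1}\ge 0$ be real numbers. Consider the optimization problem (P) described in the context. Then the optimal value of (P) satisfies $$\left(\sum_{i=1}^{n}Y_i\right)^*\ge \sum_{i=1}^{n-1}\min\left\{\frac{l_i}{v_2}w_I,\frac{2r_0}{v_1+v_2}w_V\right\}+\frac{2r_0}{v_1+v_2}w_V .$$ Moreover, this lower bound is attained by the feasible point $$D_i^*=\frac{\min\{l_i,2r_I\}}{v_2}w_I,\quad Y_i^*=\min\left\{\frac{l_i w_I}{v_2},\frac{2r_0 w_V}{v_1+v_2}\right\}\ (i=1,\dots,n-1),\qquad D_n^*=\frac{2r_I}{v_2}w_I,\quad Y_n^*=\frac{2r_0}{v_1+v_2}w_V .$$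
   Context: Model: a vehicle of interest (VoI) moving at speed $v_1$ receives data from $n$ "helper" vehicles moving in the opposite direction at speed $v_2$; consecutive helpers are at distances $l_1,\dots,l_{n-1}$; helpers download from an infrastructure point of radio range $r_I$ at rate $w_I$, and deliver to the VoI over vehicle links of range $r_0$ at rate $w_V$. $D_i$ is the amount of data helper $i$ receives from the infrastructure and $Y_i$ the amount it delivers to the VoI. The optimization problem (P), over real variables $D_1,\dots,D_n,Y_1,\dots,Y_n$, is: maximize $\sum_{i=1}^n Y_i$ subject to (i) $0\le D_i\le \frac{2r_I}{v_2}w_I$ for $i=1,\dots,n$; (ii) $\sum_{i=k_1}^{k_2}D_i\le \frac{\sum_{i=k_1}^{k_2-1}\min\{l_i,2r_I\}+2r_I}{v_2}w_I$ for all $1\le k_1\le k_2\le n$; (iii) $0\le Y_i\le \frac{2r_0}{v_1+v_2}w_V$ for $i=1,\dots,n$; (iv) $Y_i\le D_i$ for $i=1,\dots,n$; (v) $\sum_{i=k_1}^{k_2}Y_i\le \frac{\sum_{i=k_1}^{k_2-1}\min\{l_i,2r_0\}+2r_0}{v_1+v_2}w_V$ for all $1\le k_1\le k_2\le n$. (Empty sums are zero.) *)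

theory Defs
  imports Complex_Main
begin

text \<open>Feasibility for problem (P). Helpers and inter-helper distances are indexed from 1:
  D i, Y i for i = 1..n, and l i for i = 1..n-1. Values outside these ranges are irrelevant.\<close>

definition feasibleP ::
  "real \<Rightarrow> real \<Rightarrow> real \<Rightarrow> real \<Rightarrow> real \<Rightarrow> real \<Rightarrow> nat \<Rightarrow> (nat \<Rightarrow> real)
   \<Rightarrow> (nat \<Rightarrow> real) \<Rightarrow> (nat \<Rightarrow> real) \<Rightarrow> bool" where
  "feasibleP rI r0 v1 v2 wI wV n l D Y \<longleftrightarrow>
     (\<forall>i\<in>{1..n}. 0 \<le> D i \<and> D i \<le> 2 * rI / v2 * wI) \<and>
     (\<forall>k1 k2. 1 \<le> k1 \<and> k1 \<le> k2 \<and> k2 \<le> n \<longrightarrow>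
        (\<Sum>i=k1..k2. D i) \<le> ((\<Sum>i=k1..<k2. min (l i) (2 * rI)) + 2 * rI) / v2 * wI) \<and>
     (\<forall>i\<in>{1..n}. 0 \<le> Y i \<and> Y i \<le> 2 * r0 / (v1 + v2) * wV) \<and>
     (\<forall>i\<in>{1..n}. Y i \<le> D i) \<and>
     (\<forall>k1 k2. 1 \<le> k1 \<and> k1 \<le> k2 \<and> k2 \<le> n \<longrightarrow>
        (\<Sum>i=k1..k2. Y i) \<le> ((\<Sum>i=k1..<k2. min (l i) (2 * r0)) + 2 * r0) / (v1 + v2) * wV)"

end

theory Submission
  imports Defs
begin

text \<open>Only the rates a = wI/v2 and b = wV/(v1+v2) matter: a helper downloads a per unit of
  distance it travels and delivers b per unit of relative distance to the VoI. Helper i < n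
  downloads everything it can before helper i+1 enters the infrastructure range, namely
  min l_i (2 rI) a, and forwards min (l_i a) (2 r0 b) of it. The hypotheses give
  0 < a < b and 2 r0 b < 2 rI a, so every window of consecutive helpers respects both
  aggregate rate limits, and the objective is bounded above by constraint (v) for the full
  window, whence its supremum dominates the value of this greedy point.\<close>

lemma sum_atLeastAtMost_le_window:
  fixes f g :: "nat \<Rightarrow> 'a::linordered_semiring"
  assumes "k1 \<le> k2"
    and "\<And>i. k1 \<le> i \<Longrightarrow> i < k2 \<Longrightarrow> f i \<le> g i * c"
    and "f k2 \<le> t * c"
  shows "(\<Sum>i=k1..k2. f i) \<le> ((\<Sum>i=k1..<k2. g i) + t) * c"
proof -
  have "(\<Sum>i=k1..k2. f i) = f k2 + (\<Sum>i=k1..<k2. f i)"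
    using assms(1) by (rule sum.last_plus)
  also have "\<dots> \<le> t * c + (\<Sum>i=k1..<k2. g i * c)"
    using assms(2,3) by (intro add_mono sum_mono) auto
  finally show ?thesis
    by (simp add: sum_distrib_right distrib_right add.commute)
qed

lemma min_mult_le_min_mult_right:
  fixes x y r a :: "'a::linordered_idom"
  assumes "0 \<le> a" "y \<le> r * a"
  shows "min (x * a) y \<le> min x r * a"
  using assms by (simp add: min_mult_distrib_right min.coboundedI2)

lemma min_mult_le_min_mult_larger:
  fixes x r a b :: "'a::linordered_idom"
  assumes "0 \<le> x" "0 \<le> b" "a \<le> b"
  shows "min (x * a) (r * b) \<le> min x r * b"
  using assms by (simp add: min_mult_distrib_right min.coboundedI1 mult_left_mono)

lemma feasibleP_greedy:
  fixes rI r0 v1 v2 wI wV :: real and n :: nat and l :: "nat \<Rightarrow> real"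
  defines "a \<equiv> wI / v2" and "b \<equiv> wV / (v1 + v2)"
  assumes "0 \<le> a" "a \<le> b" "0 \<le> r0" "0 \<le> rI" "r0 * b \<le> rI * a"
    and l_nonneg: "\<forall>i\<in>{1..n-1}. 0 \<le> l i"
  shows "feasibleP rI r0 v1 v2 wI wV n l
           (\<lambda>i. if i = n then 2 * rI * a else min (l i) (2 * rI) * a)
           (\<lambda>i. if i = n then 2 * r0 * b else min (l i * a) (2 * r0 * b))"
    (is "feasibleP _ _ _ _ _ _ _ _ ?D ?Y")
proof -
  have rates: "\<And>x. x / v2 * wI = x * a" "\<And>x. x / (v1 + v2) * wV = x * b"
    by (simp_all add: a_def b_def)
  have "0 \<le> b"
    using \<open>0 \<le> a\<close> \<open>a \<le> b\<close> by linarith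
  have l_before_n: "0 \<le> l i" if "1 \<le> i" "i < n" for i
    using l_nonneg that by auto
  have D_bounds: "0 \<le> ?D i \<and> ?D i \<le> 2 * rI * a" if "i \<in> {1..n}" for i
    using that l_before_n[of i] \<open>0 \<le> rI\<close> \<open>0 \<le> a\<close>
    by (simp add: mult_right_mono)
  have Y_bounds: "0 \<le> ?Y i \<and> ?Y i \<le> 2 * r0 * b" if "i \<in> {1..n}" for i
    using that l_before_n[of i] \<open>0 \<le> a\<close> \<open>0 \<le> b\<close> \<open>0 \<le> r0\<close> by simp
  have Y_le_D: "?Y i \<le> ?D i" for i
    using \<open>0 \<le> a\<close> \<open>r0 * b \<le> rI * a\<close> by (simp add: min_mult_le_min_mult_right)
  have D_windows: "(\<Sum>i=k1..k2. ?D i) \<le> ((\<Sum>i=k1..<k2. min (l i) (2 * rI)) + 2 * rI) * a"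
    if "1 \<le> k1" "k1 \<le> k2" "k2 \<le> n" for k1 k2
    using that D_bounds[of k2] by (intro sum_atLeastAtMost_le_window) auto
  have Y_windows: "(\<Sum>i=k1..k2. ?Y i) \<le> ((\<Sum>i=k1..<k2. min (l i) (2 * r0)) + 2 * r0) * b"
    if "1 \<le> k1" "k1 \<le> k2" "k2 \<le> n" for k1 k2
    using that Y_bounds[of k2] l_before_n \<open>0 \<le> b\<close> \<open>a \<le> b\<close>
    by (intro sum_atLeastAtMost_le_window) (simp_all add: min_mult_le_min_mult_larger)
  show ?thesis
    unfolding feasibleP_def rates
    using D_bounds Y_bounds Y_le_D D_windows Y_windows by blast
qed

lemma bdd_above_feasibleP_objective:
  assumes "1 \<le> n"
  shows "bdd_above {\<Sum>i=1..n. Y i | D Y. feasibleP rI r0 v1 v2 wI wV n l D Y}"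
  using assms unfolding feasibleP_def
  by (intro bdd_aboveI[where M = "((\<Sum>i=1..<n. min (l i) (2 * r0)) + 2 * r0) / (v1 + v2) * wV"])
    blast

theorem theorem3:
  fixes rI r0 v1 v2 wI wV :: real and n :: nat and l :: "nat \<Rightarrow> real"
  assumes "rI > r0" "r0 > 0" "v1 > 0" "v2 > 0" "wV > 0"
    and "r0 * wV * v2 / (rI * (v1 + v2)) < wI" "wI < wV * v2 / (v1 + v2)"
    and "n \<ge> 1"
    and "\<forall>i\<in>{1..n-1}. l i \<ge> 0"
  defines "Dst \<equiv> (\<lambda>i. if i = n then 2 * rI / v2 * wI else min (l i) (2 * rI) / v2 * wI)"
    and "Yst \<equiv> (\<lambda>i. if i = n then 2 * r0 / (v1 + v2) * wV
                    else min (l i * wI / v2) (2 * r0 * wV / (v1 + v2)))"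
    and "bound \<equiv> (\<Sum>i=1..n-1. min (l i / v2 * wI) (2 * r0 / (v1 + v2) * wV))
                  + 2 * r0 / (v1 + v2) * wV"
  shows "Sup {\<Sum>i=1..n. Y i | D Y. feasibleP rI r0 v1 v2 wI wV n l D Y} \<ge> bound
         \<and> feasibleP rI r0 v1 v2 wI wV n l Dst Yst
         \<and> (\<Sum>i=1..n. Yst i) = bound"
proof -
  define a where "a = wI / v2"
  define b where "b = wV / (v1 + v2)"
  have "r0 * wV * v2 < wI * (rI * (v1 + v2))"
    using assms(1-6) by (simp add: pos_divide_less_eq)
  then have "r0 * b < rI * a"
    using assms(3,4) by (simp add: a_def b_def field_simps)
  have "a < b"
    using assms(3,4,7) by (simp add: a_def b_def field_simps)
  have "0 < b"
    using assms(3-5) by (simp add: b_def)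
  then have "0 < rI * a"
    using mult_pos_pos[OF assms(2) \<open>0 < b\<close>] \<open>r0 * b < rI * a\<close> by linarith
  then have "0 < a"
    using assms(1,2) by (simp add: zero_less_mult_iff)
  have "Dst = (\<lambda>i. if i = n then 2 * rI * a else min (l i) (2 * rI) * a)"
    by (simp add: Dst_def a_def fun_eq_iff)
  moreover have "Yst = (\<lambda>i. if i = n then 2 * r0 * b else min (l i * a) (2 * r0 * b))"
    by (simp add: Yst_def a_def b_def fun_eq_iff)
  ultimately have feasible: "feasibleP rI r0 v1 v2 wI wV n l Dst Yst"
    using feasibleP_greedy[of wI v2 wV v1 r0 rI n l, folded a_def b_def]
      \<open>0 < a\<close> \<open>a < b\<close> \<open>r0 * b < rI * a\<close> assms(1,2,9)
    by simp
  have "(\<Sum>i=1..<n. Yst i) = (\<Sum>i=1..n-1. min (l i / v2 * wI) (2 * r0 / (v1 + v2) * wV))"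
    using assms(8) by (intro sum.cong) (auto simp: Yst_def)
  moreover have "Yst n = 2 * r0 / (v1 + v2) * wV"
    by (simp add: Yst_def)
  ultimately have objective: "(\<Sum>i=1..n. Yst i) = bound"
    using sum.last_plus[OF assms(8), of Yst] by (simp add: bound_def)
  show ?thesis
    using feasible objective cSup_upper[OF _ bdd_above_feasibleP_objective[OF assms(8)]] by force
qed

end
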